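(* (Weak progress for $\lambda_{\mathrm{ch}}$ configurations.) Let $\cdot ; \cdot \vdash \mathcal{C}$, suppose $\mathcal{C}$ cannot reduce (there is no $\mathcal{C}'$ with $\mathcal{C} \longrightarrow \mathcal{C}'$), and let $\mathcal{C}' = (\nu a_1) \ldots (\nu a_n)(M_1 \parallel \ldots \parallel M_m \parallel a_1(\vec V_1) \parallel \ldots \parallel a_n(\vec V_n))$ be a canonical form of $\mathcal{C}$. Then every leaf of $\mathcal{C}$ is either: (1) a buffer $a_i(\vec V_i)$; (2) a fully-reduced term of the form $\mathbf{return}\ V$; or (3) a term of the form $E[\mathbf{take}\ a_i]$ where $\vec V_i = \epsilon$.
   Context: The calculus $\lambda_{\mathrm{ch}}$. Types $A,B ::= \mathbf{1} \mid A \to B \mid \mathsf{Chan}(A)$; $\alpha$ ranges over variables $x$ and names $a$; values $V,W ::= \alpha \mid \lambda x.M \mid ()$; computations $M,N ::= V\,W \mid \mathbf{let}\ x \Leftarrow M\ \mathbf{in}\ N \mid \mathbf{return}\ V \mid \mathbf{fork}\ M \mid \mathbf{give}\ V\ W \mid \mathbf{take}\ V \mid \mathbf{newCh}$. Value typing: $\Gamma\vdash\alpha:A$ if $\alpha:A\in\Gamma$; $\Gamma\vdash\lambda x.M:A\to B$ if $\Gamma,x:A\vdash M:B$; $\Gamma\vdash():\mathbf 1$. Computation typing: $V\,W : B$ if $V:A\to B$, $W:A$; $\mathbf{let}\ x \Leftarrow M\ \mathbf{in}\ N : B$ if $\Gamma\vdash M:A$, $\Gamma,x:A\vdash N:B$;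 $\mathbf{return}\ V : A$ if $V:A$; $\mathbf{give}\ V\ W : \mathbf{1}$ if $V:A$, $W:\mathsf{Chan}(A)$; $\mathbf{take}\ V : A$ if $V:\mathsf{Chan}(A)$; $\mathbf{fork}\ M : \mathbf{1}$ if $M:\mathbf 1$; $\mathbf{newCh} : \mathsf{Chan}(A)$ for any $A$. Evaluation contexts $E ::= [\,] \mid \mathbf{let}\ x \Leftarrow E\ \mathbf{in}\ M$; term reduction: $(\lambda x.M)V \longrightarrow_{\mathsf{M}} M\{V/x\}$, $\mathbf{let}\ x \Leftarrow \mathbf{return}\ V\ \mathbf{in}\ M \longrightarrow_{\mathsf{M}} M\{V/x\}$, $E[M_1]\longrightarrow_{\mathsf{M}} E[M_2]$ if $M_1\longrightarrow_{\mathsf{M}} M_2$. Configurations $\mathcal{C},\mathcal{D} ::= \mathcal{C} \parallel \mathcal{D} \mid (\nu a)\mathcal{C} \mid a(\vec V) \mid M$ ($a(\vec V)$ a buffer named $a$ holding $\vec V=V_1\cdot\ldots\cdot V_n$; $\epsilon$ the empty sequence). Configuration contexts $G ::= [\,] \mid G \parallel \mathcal{C} \mid (\nu a)G$. Configuration typing $\Gamma;\Delta\vdash\mathcal{C}$ ($\Delta$ linear): (Par) $\Gamma;\Delta_1\vdash\mathcal{C}_1$, $\Gamma;\Delta_2\vdash\mathcal{C}_2$ give $\Gamma;\Delta_1,\Delta_2\vdash\mathcal{C}_1\parallel\mathcal{C}_2$; (Chan) $\Gamma,a:\mathsf{Chan}(A);\Delta,a:A\vdash\mathcal{C}$ gives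 $\Gamma;\Delta\vdash(\nu a)\mathcal{C}$; (Buf) $\Gamma\vdash V_i:A$ for all $i$ gives $\Gamma;a:A\vdash a(\vec V)$; (Term) $\Gamma\vdash M:\mathbf 1$ gives $\Gamma;\cdot\vdash M$. Structural congruence $\equiv$: least congruence closed under $G[-]$ with commutativity/associativity of $\parallel$ and $\mathcal{C}\parallel(\nu a)\mathcal{D}\equiv(\nu a)(\mathcal{C}\parallel\mathcal{D})$ if $a\notin\mathsf{fv}(\mathcal{C})$. Reduction $\longrightarrow$ (modulo $\equiv$): $E[\mathbf{give}\ W\ a] \parallel a(\vec V) \longrightarrow E[\mathbf{return}\ ()] \parallel a(\vec V \cdot W)$; $E[\mathbf{take}\ a] \parallel a(W\cdot\vec V) \longrightarrow E[\mathbf{return}\ W] \parallel a(\vec V)$; $E[\mathbf{fork}\ M] \longrightarrow E[\mathbf{return}\ ()] \parallel M$; $E[\mathbf{newCh}] \longrightarrow (\nu a)(E[\mathbf{return}\ a] \parallel a(\epsilon))$, $a$ fresh; $G[M_1]\longrightarrow G[M_2]$ if $M_1\longrightarrow_{\mathsf{M}} M_2$; $G[\mathcal{C}_1]\longrightarrow G[\mathcal{C}_2]$ if $\mathcal{C}_1\longrightarrow\mathcal{C}_2$. A configuration $\mathcal{C}'$ is a canonical form of $\mathcal{C}$ if $\mathcal{C}'\equiv\mathcal{C}$ and $\mathcal{C}'$ can be written $(\nu a_1) \ldots (\nu a_n)(M_1 \parallel \ldots \parallel M_m \parallel a_1(\vec V_1) \parallel \ldots \parallel a_n(\vec V_n))$.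 A leaf of a configuration is a subconfiguration without subconfigurations, i.e. a term or a buffer. *)

theory Defs
  imports Main
begin

datatype ty = TUnit | TFun ty ty | TChan ty

text \<open>Variables are de Bruijn indices (binders: lambda and let); names are natural numbers
  (bound only by nu in configurations).\<close>

datatype val = Var nat | Nm nat | Lam comp | UnitV
     and comp = App val val | Let comp comp | Return val | Fork comp
              | Give val val | Take val | NewCh

text \<open>Give V W means give V W: send V along channel W.\<close>

datatype config = Par config config | Nu nat config | Buf nat "val list" | Tm comp

primrec lift_v :: "nat \<Rightarrow> val \<Rightarrow> val" and lift_c :: "nat \<Rightarrow> comp \<Rightarrow> comp" where
  "lift_v k (Var i) = (if i < k then Var i else Var (Suc i))"
| "lift_v k (Nm a) = Nm a"
| "lift_v k (Lam M) = Lam (lift_c (Suc k) M)"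
| "lift_v k UnitV = UnitV"
| "lift_c k (App V W) = App (lift_v k V) (lift_v k W)"
| "lift_c k (Let M N) = Let (lift_c k M) (lift_c (Suc k) N)"
| "lift_c k (Return V) = Return (lift_v k V)"
| "lift_c k (Fork M) = Fork (lift_c k M)"
| "lift_c k (Give V W) = Give (lift_v k V) (lift_v k W)"
| "lift_c k (Take V) = Take (lift_v k V)"
| "lift_c k NewCh = NewCh"

primrec subst_v :: "val \<Rightarrow> nat \<Rightarrow> val \<Rightarrow> val" and subst_c :: "val \<Rightarrow> nat \<Rightarrow> comp \<Rightarrow> comp" where
  "subst_v V k (Var i) = (if i < k then Var i else if i = k then V else Var (i - 1))"
| "subst_v V k (Nm a) = Nm a"
| "subst_v V k (Lam M) = Lam (subst_c (lift_v 0 V) (Suc k) M)"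
| "subst_v V k UnitV = UnitV"
| "subst_c V k (App W U) = App (subst_v V k W) (subst_v V k U)"
| "subst_c V k (Let M N) = Let (subst_c V k M) (subst_c (lift_v 0 V) (Suc k) N)"
| "subst_c V k (Return W) = Return (subst_v V k W)"
| "subst_c V k (Fork M) = Fork (subst_c V k M)"
| "subst_c V k (Give W U) = Give (subst_v V k W) (subst_v V k U)"
| "subst_c V k (Take W) = Take (subst_v V k W)"
| "subst_c V k NewCh = NewCh"

primrec fn_v :: "val \<Rightarrow> nat set" and fn_c :: "comp \<Rightarrow> nat set" where
  "fn_v (Var i) = {}"
| "fn_v (Nm a) = {a}"
| "fn_v (Lam M) = fn_c M"
| "fn_v UnitV = {}"
| "fn_c (App V W) = fn_v V \<union> fn_v W"
| "fn_c (Let M N) = fn_c M \<union> fn_c N"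
| "fn_c (Return V) = fn_v V"
| "fn_c (Fork M) = fn_c M"
| "fn_c (Give V W) = fn_v V \<union> fn_v W"
| "fn_c (Take V) = fn_v V"
| "fn_c NewCh = {}"

primrec fn_cfg :: "config \<Rightarrow> nat set" where
  "fn_cfg (Par C D) = fn_cfg C \<union> fn_cfg D"
| "fn_cfg (Nu a C) = fn_cfg C - {a}"
| "fn_cfg (Buf a Vs) = insert a (\<Union>V\<in>set Vs. fn_v V)"
| "fn_cfg (Tm M) = fn_c M"

text \<open>Typing environments Gamma are split into a variable part (de Bruijn list) and a name part.\<close>

inductive vty :: "ty list \<Rightarrow> (nat \<rightharpoonup> ty) \<Rightarrow> val \<Rightarrow> ty \<Rightarrow> bool"
  and cty :: "ty list \<Rightarrow> (nat \<rightharpoonup> ty) \<Rightarrow> comp \<Rightarrow> ty \<Rightarrow> bool" where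
  T_Var: "i < length \<Gamma>v \<Longrightarrow> \<Gamma>v ! i = A \<Longrightarrow> vty \<Gamma>v \<Gamma>n (Var i) A"
| T_Nm: "\<Gamma>n a = Some A \<Longrightarrow> vty \<Gamma>v \<Gamma>n (Nm a) A"
| T_Lam: "cty (A # \<Gamma>v) \<Gamma>n M B \<Longrightarrow> vty \<Gamma>v \<Gamma>n (Lam M) (TFun A B)"
| T_Unit: "vty \<Gamma>v \<Gamma>n UnitV TUnit"
| T_App: "vty \<Gamma>v \<Gamma>n V (TFun A B) \<Longrightarrow> vty \<Gamma>v \<Gamma>n W A \<Longrightarrow> cty \<Gamma>v \<Gamma>n (App V W) B"
| T_Let: "cty \<Gamma>v \<Gamma>n M A \<Longrightarrow> cty (A # \<Gamma>v) \<Gamma>n N B \<Longrightarrow> cty \<Gamma>v \<Gamma>n (Let M N) B"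
| T_Return: "vty \<Gamma>v \<Gamma>n V A \<Longrightarrow> cty \<Gamma>v \<Gamma>n (Return V) A"
| T_Give: "vty \<Gamma>v \<Gamma>n V A \<Longrightarrow> vty \<Gamma>v \<Gamma>n W (TChan A) \<Longrightarrow> cty \<Gamma>v \<Gamma>n (Give V W) TUnit"
| T_Take: "vty \<Gamma>v \<Gamma>n V (TChan A) \<Longrightarrow> cty \<Gamma>v \<Gamma>n (Take V) A"
| T_Fork: "cty \<Gamma>v \<Gamma>n M TUnit \<Longrightarrow> cty \<Gamma>v \<Gamma>n (Fork M) TUnit"
| T_NewCh: "cty \<Gamma>v \<Gamma>n NewCh (TChan A)"

text \<open>Configuration typing Gamma; Delta |- C. Configurations are closed with respect to
  variables, so Gamma only assigns types to names; Delta is linear (disjoint splitting).\<close>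

inductive cfg_ty :: "(nat \<rightharpoonup> ty) \<Rightarrow> (nat \<rightharpoonup> ty) \<Rightarrow> config \<Rightarrow> bool" where
  T_Par: "cfg_ty \<Gamma> \<Delta>1 C1 \<Longrightarrow> cfg_ty \<Gamma> \<Delta>2 C2 \<Longrightarrow> dom \<Delta>1 \<inter> dom \<Delta>2 = {}
          \<Longrightarrow> cfg_ty \<Gamma> (\<Delta>1 ++ \<Delta>2) (Par C1 C2)"
| T_Chan: "cfg_ty (\<Gamma>(a \<mapsto> TChan A)) (\<Delta>(a \<mapsto> A)) C \<Longrightarrow> a \<notin> dom \<Delta>
          \<Longrightarrow> cfg_ty \<Gamma> \<Delta> (Nu a C)"
| T_Buf: "(\<forall>V\<in>set Vs. vty [] \<Gamma> V A) \<Longrightarrow> cfg_ty \<Gamma> [a \<mapsto> A] (Buf a Vs)"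
| T_Term: "cty [] \<Gamma> M TUnit \<Longrightarrow> cfg_ty \<Gamma> Map.empty (Tm M)"

datatype ectx = EHole | ELet ectx comp

primrec plugE :: "ectx \<Rightarrow> comp \<Rightarrow> comp" where
  "plugE EHole M = M"
| "plugE (ELet E N) M = Let (plugE E M) N"

inductive term_red :: "comp \<Rightarrow> comp \<Rightarrow> bool" where
  TR_Beta: "term_red (App (Lam M) V) (subst_c V 0 M)"
| TR_Let: "term_red (Let (Return V) M) (subst_c V 0 M)"
| TR_Ctx: "term_red M1 M2 \<Longrightarrow> term_red (plugE E M1) (plugE E M2)"

datatype gctx = GHole | GPar gctx config | GNu nat gctx

primrec plugG :: "gctx \<Rightarrow> config \<Rightarrow> config" where
  "plugG GHole C = C"
| "plugG (GPar G D) C = Par (plugG G C) D"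
| "plugG (GNu a G) C = Nu a (plugG G C)"

inductive scong :: "config \<Rightarrow> config \<Rightarrow> bool" where
  SC_refl: "scong C C"
| SC_sym: "scong C D \<Longrightarrow> scong D C"
| SC_trans: "scong C D \<Longrightarrow> scong D E \<Longrightarrow> scong C E"
| SC_ctx: "scong C D \<Longrightarrow> scong (plugG G C) (plugG G D)"
| SC_comm: "scong (Par C D) (Par D C)"
| SC_assoc: "scong (Par (Par C D) E) (Par C (Par D E))"
| SC_extr: "a \<notin> fn_cfg C \<Longrightarrow> scong (Par C (Nu a D)) (Nu a (Par C D))"

inductive red :: "config \<Rightarrow> config \<Rightarrow> bool" where
  R_Give: "red (Par (Tm (plugE E (Give W (Nm a)))) (Buf a Vs))
               (Par (Tm (plugE E (Return UnitV))) (Buf a (Vs @ [W])))"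
| R_Take: "red (Par (Tm (plugE E (Take (Nm a)))) (Buf a (W # Vs)))
               (Par (Tm (plugE E (Return W))) (Buf a Vs))"
| R_Fork: "red (Tm (plugE E (Fork M))) (Par (Tm (plugE E (Return UnitV))) (Tm M))"
| R_NewCh: "a \<notin> fn_c (plugE E NewCh) \<Longrightarrow>
            red (Tm (plugE E NewCh)) (Nu a (Par (Tm (plugE E (Return (Nm a)))) (Buf a [])))"
| R_Term: "term_red M1 M2 \<Longrightarrow> red (plugG G (Tm M1)) (plugG G (Tm M2))"
| R_Ctx: "red C1 C2 \<Longrightarrow> red (plugG G C1) (plugG G C2)"
| R_Cong: "scong C C1 \<Longrightarrow> red C1 C2 \<Longrightarrow> scong C2 D \<Longrightarrow> red C D"

fun par_list :: "config list \<Rightarrow> config" where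
  "par_list [] = undefined"
| "par_list [C] = C"
| "par_list (C # Cs) = Par C (par_list Cs)"

text \<open>canon as Ms Vss = (nu a_1)...(nu a_n)(M_1 || ... || M_m || a_1(V_1) || ... || a_n(V_n)).\<close>
definition canon :: "nat list \<Rightarrow> comp list \<Rightarrow> val list list \<Rightarrow> config" where
  "canon as Ms Vss = foldr Nu as (par_list (map Tm Ms @ map2 Buf as Vss))"

definition is_canonical_form :: "config \<Rightarrow> config \<Rightarrow> nat list \<Rightarrow> comp list \<Rightarrow> val list list \<Rightarrow> bool" where
  "is_canonical_form C' C as Ms Vss \<longleftrightarrow>
     scong C' C \<and> length Vss = length as \<and> map Tm Ms @ map2 Buf as Vss \<noteq> [] \<and>
     C' = canon as Ms Vss"

primrec leaves :: "config \<Rightarrow> config set" where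
  "leaves (Par C D) = leaves C \<union> leaves D"
| "leaves (Nu a C) = leaves C"
| "leaves (Buf a Vs) = {Buf a Vs}"
| "leaves (Tm M) = {Tm M}"

end

theory Submission
  imports Defs
begin

text \<open>In a closed configuration every name is bound by some \<open>\<nu>\<close>, so its type is a channel type.
  Hence every thread is a well-typed term under an environment typing only channels, and the
  standard progress argument shows that it is a value, can take a term step, or is blocked on
  \<open>fork\<close>, \<open>newCh\<close>, \<open>give\<close> or \<open>take\<close> on a name.  In a canonical form all these names are among the
  bound \<open>a\<^sub>i\<close> whose buffers occur as parallel components; so every blocked thread other than
  \<open>take\<close> on an empty buffer yields a reduction of the whole configuration.\<close>

definition chan_env :: "(nat \<rightharpoonup> ty) \<Rightarrow> bool" where
  "chan_env \<Gamma> \<longleftrightarrow> (\<forall>a A. \<Gamma> a = Some A \<longrightarrow> (\<exists>B. A = TChan B))"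

fun effect_redex :: "comp \<Rightarrow> bool" where
  "effect_redex (Fork M) = True"
| "effect_redex NewCh = True"
| "effect_redex (Give W (Nm a)) = True"
| "effect_redex (Take (Nm a)) = True"
| "effect_redex _ = False"

lemma closed_chan_value_is_name: "vty [] \<Gamma> V (TChan A) \<Longrightarrow> \<exists>a. V = Nm a"
  by (erule vty.cases) auto

lemma closed_fun_value_is_lambda: "vty [] \<Gamma> V (TFun A B) \<Longrightarrow> chan_env \<Gamma> \<Longrightarrow> \<exists>M. V = Lam M"
  by (erule vty.cases) (auto simp: chan_env_def)

lemma closed_comp_progress:
  "cty \<Gamma>v \<Gamma> M A \<Longrightarrow> \<Gamma>v = [] \<Longrightarrow> chan_env \<Gamma> \<Longrightarrow>
    (\<exists>V. M = Return V) \<or> (\<exists>M'. term_red M M') \<or> (\<exists>E R. effect_redex R \<and> M = plugE E R)"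
proof (induction rule: vty_cty.inducts(2)[where ?P1.0 = "\<lambda>_ _ _ _. True"])
  case (T_App \<Gamma>v \<Gamma> V A B W)
  then obtain M where "V = Lam M" using closed_fun_value_is_lambda by blast
  then show ?case using TR_Beta by blast
next
  case (T_Let \<Gamma>v \<Gamma> M A N B)
  from T_Let.IH(1)[OF T_Let.prems] show ?case
  proof (elim disjE exE conjE)
    fix V assume "M = Return V"
    then show ?thesis using TR_Let by blast
  next
    fix M' assume "term_red M M'"
    then have "term_red (plugE (ELet EHole N) M) (plugE (ELet EHole N) M')" by (rule TR_Ctx)
    then show ?thesis by auto
  next
    fix E R assume "effect_redex R" "M = plugE E R"
    then have "effect_redex R \<and> Let M N = plugE (ELet E N) R" by simp
    then show ?thesis by blast
  qed
next
  case (T_Give \<Gamma>v \<Gamma> V A W)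
  then obtain a where "W = Nm a" using closed_chan_value_is_name by blast
  then have "effect_redex (Give V W) \<and> Give V W = plugE EHole (Give V W)" by simp
  then show ?case by blast
next
  case (T_Take \<Gamma>v \<Gamma> V A)
  then obtain a where "V = Nm a" using closed_chan_value_is_name by blast
  then have "effect_redex (Take V) \<and> Take V = plugE EHole (Take V)" by simp
  then show ?case by blast
next
  case (T_Fork \<Gamma>v \<Gamma> M)
  have "effect_redex (Fork M) \<and> Fork M = plugE EHole (Fork M)" by simp
  then show ?case by blast
next
  case (T_NewCh \<Gamma>v \<Gamma> A)
  have "effect_redex NewCh \<and> NewCh = plugE EHole NewCh" by simp
  then show ?case by blast
qed auto

lemma fn_typed: "vty \<Gamma>v \<Gamma> V A \<Longrightarrow> fn_v V \<subseteq> dom \<Gamma>" "cty \<Gamma>v \<Gamma> M B \<Longrightarrow> fn_c M \<subseteq> dom \<Gamma>"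
  by (induction rule: vty_cty.inducts) auto

lemma fn_cfg_typed: "cfg_ty \<Gamma> \<Delta> C \<Longrightarrow> fn_cfg C \<subseteq> dom \<Gamma> \<union> dom \<Delta>"
proof (induction rule: cfg_ty.induct)
  case (T_Buf Vs \<Gamma> A a)
  then show ?case using fn_typed(1) by fastforce
next
  case (T_Term \<Gamma> M)
  then show ?case using fn_typed(2) by auto
qed auto

lemma finite_fn: "finite (fn_v V)" "finite (fn_c M)"
  by (induction V and M) auto

lemma fn_c_plugE: "fn_c R \<subseteq> fn_c (plugE E R)"
  by (induction E) auto

lemma typed_leaf_term:
  "cfg_ty \<Gamma> \<Delta> C \<Longrightarrow> chan_env \<Gamma> \<Longrightarrow> Tm M \<in> leaves C \<Longrightarrow> \<exists>\<Gamma>'. chan_env \<Gamma>' \<and> cty [] \<Gamma>' M TUnit"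
proof (induction rule: cfg_ty.induct)
  case (T_Chan \<Gamma> a A \<Delta> C)
  have "chan_env (\<Gamma>(a \<mapsto> TChan A))" using T_Chan.prems(1) by (auto simp: chan_env_def)
  moreover have "Tm M \<in> leaves C" using T_Chan.prems(2) by simp
  ultimately show ?case using T_Chan.IH by blast
qed auto

lemmas [trans] = SC_trans

lemma scong_leaves: "scong C D \<Longrightarrow> leaves C = leaves D"
proof (induction rule: scong.induct)
  case (SC_ctx C D G)
  then show ?case by (induction G) auto
qed auto

lemma scong_fn_cfg: "scong C D \<Longrightarrow> fn_cfg C = fn_cfg D"
proof (induction rule: scong.induct)
  case (SC_ctx C D G)
  then show ?case by (induction G) auto
qed auto

lemma scong_Par_left: "scong C C' \<Longrightarrow> scong (Par C D) (Par C' D)"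
  using SC_ctx[of C C' "GPar GHole D"] by simp

lemma scong_Par_right: "scong D D' \<Longrightarrow> scong (Par C D) (Par C D')"
  by (rule SC_trans[OF SC_trans[OF SC_comm scong_Par_left] SC_comm])

lemma scong_Par_left_commute: "scong (Par C (Par D E)) (Par D (Par C E))"
proof -
  have "scong (Par C (Par D E)) (Par (Par C D) E)" by (rule SC_sym[OF SC_assoc])
  also have "scong \<dots> (Par (Par D C) E)" by (rule scong_Par_left[OF SC_comm])
  also have "scong \<dots> (Par D (Par C E))" by (rule SC_assoc)
  finally show ?thesis .
qed

lemma par_list_Cons: "Cs \<noteq> [] \<Longrightarrow> par_list (C # Cs) = Par C (par_list Cs)"
  by (cases Cs) auto

lemma scong_par_list_remove1:
  "C \<in> set Cs \<Longrightarrow> scong (par_list Cs) (par_list (C # remove1 C Cs))"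
proof (induction Cs)
  case (Cons D Cs)
  show ?case
  proof (cases "C = D")
    case False
    then have "C \<in> set Cs" using Cons.prems by simp
    then have "scong (par_list (D # Cs)) (Par D (par_list (C # remove1 C Cs)))"
      using scong_Par_right[OF Cons.IH] par_list_Cons[of Cs D] by fastforce
    also have "scong \<dots> (par_list (C # D # remove1 C Cs))"
      by (cases "remove1 C Cs = []") (auto simp: par_list_Cons intro: SC_comm scong_Par_left_commute)
    finally show ?thesis using \<open>C \<noteq> D\<close> by simp
  qed (auto intro: SC_refl)
qed simp

definition reducible :: "config \<Rightarrow> bool" where
  "reducible C \<longleftrightarrow> (\<exists>C'. red C C')"

lemma reducible_scong: "scong C D \<Longrightarrow> reducible D \<Longrightarrow> reducible C"
  unfolding reducible_def using R_Cong SC_refl by blast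

lemma reducible_plugG: "reducible C \<Longrightarrow> reducible (plugG G C)"
  unfolding reducible_def using R_Ctx by blast

lemma reducible_foldr_Nu: "reducible C \<Longrightarrow> reducible (foldr Nu as C)"
  using reducible_plugG[where G = "GNu _ GHole"] by (induction as) auto

lemma reducible_par_list_Cons: "reducible C \<Longrightarrow> reducible (par_list (C # Cs))"
  using reducible_plugG[where G = "GPar GHole (par_list Cs)"] by (cases Cs) auto

lemma reducible_par_list_member:
  "C \<in> set Cs \<Longrightarrow> reducible C \<Longrightarrow> reducible (par_list Cs)"
  by (meson reducible_par_list_Cons reducible_scong scong_par_list_remove1)

lemma reducible_par_list_pair:
  assumes "C \<in> set Cs" "D \<in> set Cs" "C \<noteq> D" and "reducible (Par C D)"
  shows "reducible (par_list Cs)"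
proof -
  define Es where "Es = remove1 D (remove1 C Cs)"
  have "D \<in> set (remove1 C Cs)" using assms(2,3) by simp
  have "scong (par_list Cs) (par_list (C # remove1 C Cs))"
    by (rule scong_par_list_remove1[OF assms(1)])
  also have "scong \<dots> (Par C (par_list (D # Es)))"
    using scong_Par_right[OF scong_par_list_remove1] \<open>D \<in> set (remove1 C Cs)\<close>
      par_list_Cons[of "remove1 C Cs" C]
    unfolding Es_def by fastforce
  also have "scong \<dots> (par_list (Par C D # Es))"
    by (cases "Es = []") (auto simp: par_list_Cons intro: SC_refl SC_sym SC_assoc)
  finally have "scong (par_list Cs) (par_list (Par C D # Es))" .
  then show ?thesis using assms(4) reducible_par_list_Cons reducible_scong by blast
qed

lemma leaves_par_list: "Cs \<noteq> [] \<Longrightarrow> leaves (par_list Cs) = (\<Union>C\<in>set Cs. leaves C)"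
  by (induction Cs rule: par_list.induct) auto

lemma fn_cfg_par_list: "Cs \<noteq> [] \<Longrightarrow> fn_cfg (par_list Cs) = (\<Union>C\<in>set Cs. fn_cfg C)"
  by (induction Cs rule: par_list.induct) auto

lemma canonical_form_leaves:
  "is_canonical_form C' C as Ms Vss \<Longrightarrow> leaves C = set (map Tm Ms @ map2 Buf as Vss)"
proof -
  have leaves_foldr_Nu: "leaves (foldr Nu bs D) = leaves D" for bs D
    by (induction bs) auto
  have components: "(\<Union>D\<in>set (map Tm Ms @ map2 Buf as Vss). leaves D) = set (map Tm Ms @ map2 Buf as Vss)"
    by auto
  assume "is_canonical_form C' C as Ms Vss"
  then have "leaves C = leaves C'" and "C' = canon as Ms Vss" and "map Tm Ms @ map2 Buf as Vss \<noteq> []"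
    using scong_leaves by (auto simp: is_canonical_form_def)
  then show ?thesis
    using leaves_par_list components by (simp add: canon_def leaves_foldr_Nu)
qed

lemma canonical_form_fn_cfg:
  "is_canonical_form C' C as Ms Vss \<Longrightarrow>
     fn_cfg C = (\<Union>D\<in>set (map Tm Ms @ map2 Buf as Vss). fn_cfg D) - set as"
proof -
  have fn_cfg_foldr_Nu: "fn_cfg (foldr Nu bs D) = fn_cfg D - set bs" for bs D
    by (induction bs) auto
  assume "is_canonical_form C' C as Ms Vss"
  then have "fn_cfg C = fn_cfg C'" and "C' = canon as Ms Vss" and "map Tm Ms @ map2 Buf as Vss \<noteq> []"
    using scong_fn_cfg by (auto simp: is_canonical_form_def)
  then show ?thesis
    by (simp add: canon_def fn_cfg_foldr_Nu fn_cfg_par_list)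
qed

lemma canonical_form_reducible:
  "is_canonical_form C' C as Ms Vss \<Longrightarrow> reducible (par_list (map Tm Ms @ map2 Buf as Vss))
     \<Longrightarrow> reducible C"
  unfolding is_canonical_form_def canon_def
  by (meson SC_sym reducible_foldr_Nu reducible_scong)

lemma mem_set_map2_Buf:
  "length Vss = length as \<Longrightarrow> L \<in> set (map2 Buf as Vss) \<longleftrightarrow> (\<exists>i < length as. L = Buf (as ! i) (Vss ! i))"
  by (auto simp: set_zip)

lemma irreducible_par_list_term:
  assumes irred: "\<not> reducible (par_list Cs)"
    and thread: "Tm M \<in> set Cs" "cty [] \<Gamma> M TUnit" "chan_env \<Gamma>"
    and names: "fn_c M \<subseteq> set as"
    and buffers: "\<And>i. i < length as \<Longrightarrow> Buf (as ! i) (Vss ! i) \<in> set Cs"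
  shows "(\<exists>V. M = Return V) \<or> (\<exists>E i. i < length as \<and> Vss ! i = [] \<and> M = plugE E (Take (Nm (as ! i))))"
proof -
  have alone: "\<not> reducible (Tm M)"
    using irred thread(1) reducible_par_list_member by blast
  have with_buffer: "\<not> reducible (Par (Tm M) (Buf (as ! i) (Vss ! i)))" if "i < length as" for i
    using irred thread(1) buffers[OF that] reducible_par_list_pair by blast
  have buffer_of: "\<exists>i < length as. as ! i = a" if "a \<in> fn_c M" for a
    using that names by (auto simp: in_set_conv_nth)
  consider V where "M = Return V" | M' where "term_red M M'" | E R where "effect_redex R" "M = plugE E R"
    using closed_comp_progress[OF thread(2) refl thread(3)] by blast
  then show ?thesis
  proof cases
    case 2
    then show ?thesis using alone R_Term[where G = GHole] by (auto simp: reducible_def)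
  next
    case (3 E R)
    have buffer_of_redex: "\<exists>i < length as. as ! i = a" if "a \<in> fn_c R" for a
      using that fn_c_plugE[of R E] \<open>M = plugE E R\<close> buffer_of by blast
    from \<open>effect_redex R\<close> show ?thesis
    proof (cases R rule: effect_redex.cases)
      case (1 N)
      then show ?thesis using alone R_Fork \<open>M = plugE E R\<close> by (auto simp: reducible_def)
    next
      case 2
      obtain a where "a \<notin> fn_c (plugE E NewCh)"
        using ex_new_if_finite[OF infinite_UNIV_nat finite_fn(2)] by blast
      then show ?thesis using alone R_NewCh 2 \<open>M = plugE E R\<close> by (auto simp: reducible_def)
    next
      case (3 W a)
      then obtain i where i: "i < length as" "as ! i = a" using buffer_of_redex by auto
      have "red (Par (Tm M) (Buf (as ! i) (Vss ! i)))
          (Par (Tm (plugE E (Return UnitV))) (Buf a (Vss ! i @ [W])))"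
        unfolding \<open>M = plugE E R\<close> 3 i(2) by (rule R_Give)
      then show ?thesis using with_buffer[OF i(1)] by (auto simp: reducible_def)
    next
      case (4 a)
      then obtain i where i: "i < length as" "as ! i = a" using buffer_of_redex by auto
      show ?thesis
      proof (cases "Vss ! i")
        case Nil
        then show ?thesis using i 4 \<open>M = plugE E R\<close> by blast
      next
        case (Cons W Ws)
        have "red (Par (Tm M) (Buf (as ! i) (Vss ! i))) (Par (Tm (plugE E (Return W))) (Buf a Ws))"
          unfolding \<open>M = plugE E R\<close> 4 i(2) Cons by (rule R_Take)
        then show ?thesis using with_buffer[OF i(1)] by (auto simp: reducible_def)
      qed
    qed auto
  qed simp
qed

theorem theorem8:
  assumes "cfg_ty Map.empty Map.empty C"
    and "\<not> (\<exists>C''. red C C'')"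
    and "is_canonical_form C' C as Ms Vss"
  shows "\<forall>L \<in> leaves C.
           (\<exists>i < length as. L = Buf (as ! i) (Vss ! i))
         \<or> (\<exists>V. L = Tm (Return V))
         \<or> (\<exists>E i. i < length as \<and> Vss ! i = [] \<and> L = Tm (plugE E (Take (Nm (as ! i)))))"
proof
  fix L assume L: "L \<in> leaves C"
  define Cs where "Cs = map Tm Ms @ map2 Buf as Vss"
  have len: "length Vss = length as" using assms(3) by (simp add: is_canonical_form_def)
  have irred: "\<not> reducible (par_list Cs)"
    using assms(2,3) canonical_form_reducible unfolding Cs_def reducible_def by blast
  have names: "(\<Union>D\<in>set Cs. fn_cfg D) \<subseteq> set as"
    using fn_cfg_typed[OF assms(1)] canonical_form_fn_cfg[OF assms(3)] unfolding Cs_def by auto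
  have buffers: "Buf (as ! i) (Vss ! i) \<in> set Cs" if "i < length as" for i
    using mem_set_map2_Buf[OF len] that unfolding Cs_def by auto
  consider M where "M \<in> set Ms" "L = Tm M" | "L \<in> set (map2 Buf as Vss)"
    using L canonical_form_leaves[OF assms(3)] by auto
  then show "(\<exists>i < length as. L = Buf (as ! i) (Vss ! i)) \<or> (\<exists>V. L = Tm (Return V))
         \<or> (\<exists>E i. i < length as \<and> Vss ! i = [] \<and> L = Tm (plugE E (Take (Nm (as ! i)))))"
  proof cases
    case (1 M)
    have "chan_env Map.empty" by (simp add: chan_env_def)
    then obtain \<Gamma> where "chan_env \<Gamma>" "cty [] \<Gamma> M TUnit"
      using typed_leaf_term[OF assms(1)] L 1(2) by blast
    moreover have "Tm M \<in> set Cs" and "fn_c M \<subseteq> set as" using 1 names unfolding Cs_def by auto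
    ultimately show ?thesis using irreducible_par_list_term[OF irred] buffers 1(2) by blast
  next
    case 2
    then show ?thesis using mem_set_map2_Buf[OF len] by blast
  qed
qed

end
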